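(* Let $q$ be a prime power and let $n,k,\delta,\alpha$ be positive integers with $k\le n$, $\alpha\ge 2$ and $\delta\le(\alpha-1)k$. Put $h=\left\lfloor k+1-\frac{\delta}{\alpha-1}\right\rfloor$. Then $$B_q(n,k,\delta;\alpha)\le(\alpha-1)\frac{\left[{n\atop h}\right]_q}{\left[{k\atop h}\right]_q}.$$
   Context: For a prime power $q$, $\mathcal{G}_q(n,k)$ denotes the set of all $k$-dimensional subspaces of $\mathbb{F}_q^n$, and the Gaussian binomial coefficient is $\left[{n\atop k}\right]_q=\prod_{i=0}^{k-1}\frac{q^n-q^i}{q^k-q^i}=|\mathcal{G}_q(n,k)|$. An $\alpha$-$(n,k,\delta)_q^c$ covering Grassmannian code is a subset $\mathcal{C}\subseteq\mathcal{G}_q(n,k)$ (no repeated codewords) such that every set of $\alpha$ distinct codewords of $\mathcal{C}$ spans a subspace of $\mathbb{F}_q^n$ of dimension at least $k+\delta$. $B_q(n,k,\delta;\alpha)$ denotes the maximum size of an $\alpha$-$(n,k,\delta)_q^c$ code. *)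

theory Defs
  imports "HOL-Analysis.Analysis"
begin

definition gauss_binom :: "nat \<Rightarrow> nat \<Rightarrow> nat \<Rightarrow> real" where
  "gauss_binom q n k = (\<Prod>i<k. (real q ^ n - real q ^ i) / (real q ^ k - real q ^ i))"

text \<open>The Grassmannian G_q(n,k): all k-dimensional subspaces of F^n, where the field F
  is the finite type 'a (of order q = CARD('a)) and n = CARD('n).\<close>
definition grassmannian :: "nat \<Rightarrow> ('a::field ^ 'n) set set" where
  "grassmannian k = {U. vec.subspace U \<and> vec.dim U = k}"

definition covering_code :: "nat \<Rightarrow> nat \<Rightarrow> nat \<Rightarrow> ('a::field ^ 'n) set set \<Rightarrow> bool" where
  "covering_code k \<delta> \<alpha> C \<longleftrightarrow> C \<subseteq> grassmannian k \<and>
     (\<forall>A \<subseteq> C. card A = \<alpha> \<longrightarrow> vec.dim (vec.span (\<Union>A)) \<ge> k + \<delta>)"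

definition B_cov :: "('a::{finite,field} ^ 'n) itself \<Rightarrow> nat \<Rightarrow> nat \<Rightarrow> nat \<Rightarrow> nat" where
  "B_cov _ k \<delta> \<alpha> = Max {card C | C :: ('a ^ 'n) set set. covering_code k \<delta> \<alpha> C}"

end

theory Submission imports Defs begin

text \<open>Count ordered independent h-tuples. A k-dimensional subspace contains
  \<open>\<Prod>i<h. q^k - q^i\<close> of them and the whole space \<open>\<Prod>i<h. q^n - q^i\<close>. If \<alpha> codewords
  contained a common independent h-tuple, their span would have dimension at most
  \<open>h + \<alpha>(k - h) < k + \<delta>\<close> by the choice of h, so every tuple lies in at most \<open>\<alpha> - 1\<close>
  codewords. Double counting pairs (codeword, tuple inside it) gives
  \<open>|C| \<Prod>i<h. (q^k - q^i) \<le> (\<alpha> - 1) \<Prod>i<h. (q^n - q^i)\<close>, which is the claim.\<close>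

lemma card_span_independent:
  fixes B :: "('a::{finite,field}^'n) set"
  assumes "vec.independent B"
  shows "card (vec.span B) = CARD('a) ^ card B"
proof -
  have "finite B" by simp
  then show ?thesis using assms
  proof (induction B rule: finite_induct)
    case empty then show ?case by simp
  next
    case (insert x F)
    have indF: "vec.independent F" and xF: "x \<notin> vec.span F"
      using insert.prems insert.hyps by (auto simp: vec.independent_insert)
    let ?f = "\<lambda>(a, s). a *s x + s"
    have span_eq: "vec.span (insert x F) = ?f ` (UNIV \<times> vec.span F)"
    proof (auto simp: vec.span_insert)
      fix y c assume "y - c *s x \<in> vec.span F"
      then show "y \<in> ?f ` (UNIV \<times> vec.span F)"
        by (intro image_eqI[where x="(c, y - c *s x)"]) auto
    next
      fix a s assume "s \<in> vec.span F"
      then show "\<exists>c. a *s x + s - c *s x \<in> vec.span F" by (intro exI[where x=a]) simp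
    qed
    have "inj_on ?f (UNIV \<times> vec.span F)"
    proof (rule inj_onI, clarsimp)
      fix a s b t assume "s \<in> vec.span F" "t \<in> vec.span F" and e: "a *s x + s = b *s x + t"
      moreover have "(a - b) *s x = t - s"
        using e by (simp add: algebra_simps vector_sadd_rdistrib vector_ssub_ldistrib)
      ultimately have in_span: "(a - b) *s x \<in> vec.span F" by (simp add: vec.span_diff)
      have "a = b"
      proof (rule ccontr)
        assume "a \<noteq> b"
        then have "x = inverse (a - b) *s ((a - b) *s x)"
          by (metis vector_smult_assoc left_inverse right_minus_eq vector_smult_lid)
        then show False using xF vec.span_scale[OF in_span] by metis
      qed
      then show "a = b \<and> s = t" using e by simp
    qed
    then have "card (vec.span (insert x F)) = CARD('a) * card (vec.span F)"
      unfolding span_eq by (simp add: card_image card_cartesian_product)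
    then show ?case using insert indF by simp
  qed
qed

lemma card_subspace:
  fixes U :: "('a::{finite,field}^'n) set"
  assumes "vec.subspace U"
  shows "card U = CARD('a) ^ vec.dim U"
proof -
  obtain B where B: "B \<subseteq> U" "vec.independent B" "U \<subseteq> vec.span B" "card B = vec.dim U"
    by (rule vec.basis_exists)
  then have "vec.span B = U" using assms by (simp add: vec.span_subspace)
  then show ?thesis using card_span_independent[OF B(2)] B(4) by simp
qed

definition indep_lists :: "('a::field^'n) set \<Rightarrow> nat \<Rightarrow> ('a^'n) list set" where
  "indep_lists U m = {xs. length xs = m \<and> set xs \<subseteq> U \<and> vec.independent (set xs) \<and> distinct xs}"

lemma finite_indep_lists: "finite (indep_lists (U::('a::{finite,field}^'n) set) m)"
proof (rule finite_subset)
  show "indep_lists U m \<subseteq> {xs. set xs \<subseteq> UNIV \<and> length xs = m}"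
    by (auto simp: indep_lists_def)
qed (rule finite_lists_length_eq, simp)

lemma indep_lists_Suc:
  "indep_lists U (Suc m) =
     (\<lambda>(xs, x). x # xs) ` (SIGMA xs:indep_lists U m. U - vec.span (set xs))"
proof (rule set_eqI, rule iffI)
  fix ys assume ys: "ys \<in> indep_lists U (Suc m)"
  then obtain x xs where ys_eq: "ys = x # xs" by (cases ys) (auto simp: indep_lists_def)
  then have "xs \<in> indep_lists U m" "x \<in> U" "x \<notin> vec.span (set xs)"
    using ys by (auto simp: indep_lists_def vec.independent_insert)
  then show "ys \<in> (\<lambda>(xs, x). x # xs) ` (SIGMA xs:indep_lists U m. U - vec.span (set xs))"
    unfolding ys_eq by force
next
  fix ys assume "ys \<in> (\<lambda>(xs, x). x # xs) ` (SIGMA xs:indep_lists U m. U - vec.span (set xs))"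
  then obtain xs x where "ys = x # xs" "xs \<in> indep_lists U m" "x \<in> U" "x \<notin> vec.span (set xs)"
    by auto
  moreover then have "x \<notin> set xs" using vec.span_base by blast
  ultimately show "ys \<in> indep_lists U (Suc m)"
    by (auto simp: indep_lists_def vec.independent_insert)
qed

lemma card_indep_lists:
  fixes U :: "('a::{finite,field}^'n) set"
  assumes U: "vec.subspace U" and "m \<le> vec.dim U"
  shows "card (indep_lists U m) = (\<Prod>i<m. CARD('a) ^ vec.dim U - CARD('a) ^ i)"
  using assms(2)
proof (induction m)
  case 0
  have "indep_lists U 0 = {[]}" by (auto simp: indep_lists_def vec.independent_empty)
  then show ?case by simp
next
  case (Suc m)
  let ?q = "CARD('a)" and ?d = "vec.dim U"
  have complement: "card (U - vec.span (set xs)) = ?q ^ ?d - ?q ^ m"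
    if "xs \<in> indep_lists U m" for xs
  proof -
    have xs: "length xs = m" "set xs \<subseteq> U" "vec.independent (set xs)" "distinct xs"
      using that by (auto simp: indep_lists_def)
    have "vec.span (set xs) \<subseteq> U" using xs(2) U by (rule vec.span_minimal)
    moreover have "card (vec.span (set xs)) = ?q ^ m"
      using card_span_independent[OF xs(3)] xs(1,4) by (simp add: distinct_card)
    ultimately show ?thesis using card_subspace[OF U] by (simp add: card_Diff_subset finite_subset)
  qed
  have "inj_on (\<lambda>(xs, x). x # xs) (SIGMA xs:indep_lists U m. U - vec.span (set xs))"
    by (rule inj_onI) auto
  then have "card (indep_lists U (Suc m)) =
      (\<Sum>xs\<in>indep_lists U m. card (U - vec.span (set xs)))"
    unfolding indep_lists_Suc by (simp add: card_image card_SigmaI finite_indep_lists)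
  also have "\<dots> = card (indep_lists U m) * (?q ^ ?d - ?q ^ m)" using complement by simp
  also have "\<dots> = (\<Prod>i<Suc m. ?q ^ ?d - ?q ^ i)" using Suc by simp
  finally show ?case .
qed

text \<open>Each member of \<open>A\<close> is spanned by \<open>S\<close> together with \<open>k - card S\<close> further vectors.\<close>

lemma dim_Union_subspaces_through_independent_le:
  fixes A :: "('a::{finite,field}^'n) set set"
  assumes "vec.independent S"
    and "\<And>U. U \<in> A \<Longrightarrow> S \<subseteq> U \<and> vec.subspace U \<and> vec.dim U = k"
  shows "vec.dim (\<Union>A) \<le> card S + card A * (k - card S)"
proof -
  have "\<exists>B. S \<subseteq> B \<and> B \<subseteq> U \<and> vec.independent B \<and> U \<subseteq> vec.span B" if "U \<in> A" for U
    using assms(2)[OF that] vec.maximal_independent_subset_extend[OF _ assms(1)] by metis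
  then obtain basis where basis: "\<And>U. U \<in> A \<Longrightarrow>
      S \<subseteq> basis U \<and> basis U \<subseteq> U \<and> vec.independent (basis U) \<and> U \<subseteq> vec.span (basis U)"
    by metis
  have card_extra: "card (basis U - S) = k - card S" if "U \<in> A" for U
  proof -
    have "card (basis U) = k"
      using basis[OF that] assms(2)[OF that] vec.basis_card_eq_dim by metis
    then show ?thesis using basis[OF that] by (simp add: card_Diff_subset)
  qed
  define G where "G = S \<union> (\<Union>U\<in>A. basis U - S)"
  have "\<Union>A \<subseteq> vec.span G"
  proof
    fix v assume "v \<in> \<Union>A"
    then obtain U where U: "U \<in> A" "v \<in> U" by auto
    then have "basis U \<subseteq> G" using basis unfolding G_def by blast
    then show "v \<in> vec.span G" using basis[OF U(1)] U(2) vec.span_mono by blast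
  qed
  then have "vec.dim (\<Union>A) \<le> card G" by (rule vec.dim_le_card) simp
  also have "\<dots> \<le> card S + card (\<Union>U\<in>A. basis U - S)"
    unfolding G_def by (rule card_Un_le)
  also have "card (\<Union>U\<in>A. basis U - S) \<le> (\<Sum>U\<in>A. card (basis U - S))"
    by (rule card_UN_le) simp
  also have "\<dots> = card A * (k - card S)" using card_extra by simp
  finally show ?thesis by simp
qed

lemma card_codewords_containing_independent_le:
  fixes C :: "('a::{finite,field}^'n) set set"
  assumes code: "covering_code k \<delta> \<alpha> C" and S: "vec.independent S"
    and small: "card S + \<alpha> * (k - card S) < k + \<delta>"
  shows "card {U\<in>C. S \<subseteq> U} \<le> \<alpha> - 1"
proof (rule ccontr)
  assume "\<not> ?thesis"
  then have "\<alpha> \<le> card {U\<in>C. S \<subseteq> U}" by simp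
  then obtain A where A: "A \<subseteq> {U\<in>C. S \<subseteq> U}" "card A = \<alpha>"
    by (rule obtain_subset_with_card_n)
  then have "k + \<delta> \<le> vec.dim (vec.span (\<Union>A))"
    using code by (auto simp: covering_code_def)
  also have "\<dots> \<le> card S + \<alpha> * (k - card S)"
    using dim_Union_subspaces_through_independent_le[OF S, of A k] A code
    by (auto simp: covering_code_def grassmannian_def)
  finally show False using small by simp
qed

lemma covering_code_card_mult_le:
  fixes C :: "('a::{finite,field}^'n) set set"
  assumes code: "covering_code k \<delta> \<alpha> C" and "h \<le> k" and "k \<le> CARD('n)"
    and small: "h + \<alpha> * (k - h) < k + \<delta>"
  shows "card C * (\<Prod>i<h. CARD('a) ^ k - CARD('a) ^ i)
         \<le> (\<alpha> - 1) * (\<Prod>i<h. CARD('a) ^ CARD('n) - CARD('a) ^ i)"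
proof -
  let ?T = "indep_lists (UNIV::('a^'n) set) h"
  have per_codeword: "card (indep_lists U h) = (\<Prod>i<h. CARD('a) ^ k - CARD('a) ^ i)"
    if "U \<in> C" for U
    using that code card_indep_lists[of U h] \<open>h \<le> k\<close>
    by (auto simp: covering_code_def grassmannian_def)
  have card_T: "card ?T = (\<Prod>i<h. CARD('a) ^ CARD('n) - CARD('a) ^ i)"
    using card_indep_lists[of "UNIV::('a^'n) set" h] assms(2,3) vec_dim_card[where 'a='a and 'n='n]
    by (simp add: vec.subspace_UNIV del: vec.dim_UNIV)
  have per_tuple: "card {U\<in>C. set xs \<subseteq> U} \<le> \<alpha> - 1" if "xs \<in> ?T" for xs
    using that small card_codewords_containing_independent_le[OF code, of "set xs"]
    by (simp add: indep_lists_def distinct_card)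
  have "card C * (\<Prod>i<h. CARD('a) ^ k - CARD('a) ^ i) = card (SIGMA U:C. indep_lists U h)"
    using per_codeword by (simp add: card_SigmaI finite_indep_lists)
  also have "(SIGMA U:C. indep_lists U h) = prod.swap ` (SIGMA xs:?T. {U\<in>C. set xs \<subseteq> U})"
    by (auto simp: indep_lists_def image_iff)
  also have "card \<dots> = (\<Sum>xs\<in>?T. card {U\<in>C. set xs \<subseteq> U})"
    by (simp add: card_image card_SigmaI finite_indep_lists)
  also have "\<dots> \<le> (\<alpha> - 1) * card ?T"
    using sum_mono[of ?T _ "\<lambda>_. \<alpha> - 1"] per_tuple by (simp add: mult.commute)
  finally show ?thesis using card_T by simp
qed

lemma floor_dimension_bounds:
  fixes k \<delta> \<alpha> :: nat
  assumes "1 \<le> \<delta>" "2 \<le> \<alpha>" "\<delta> \<le> (\<alpha> - 1) * k"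
  defines "h \<equiv> nat \<lfloor>real k + 1 - real \<delta> / real (\<alpha> - 1)\<rfloor>"
  shows "h \<le> k" and "h + \<alpha> * (k - h) < k + \<delta>"
proof -
  define r where "r = real \<delta> / real (\<alpha> - 1)"
  have a: "real (\<alpha> - 1) > 0" using assms by simp
  have "real \<delta> \<le> real (\<alpha> - 1) * real k"
    using assms(3) by (metis of_nat_le_iff of_nat_mult)
  then have "0 < r" "r \<le> real k"
    using assms(1) a by (simp_all add: r_def divide_le_eq mult.commute)
  then have h_floor: "real h \<le> real k + 1 - r" "real k - r < real h"
    unfolding h_def r_def[symmetric] by linarith+
  then show hk: "h \<le> k" using \<open>0 < r\<close> by linarith
  have "real (\<alpha> - 1) * (real k - real h) < real (\<alpha> - 1) * r" using h_floor a by simp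
  then have "real ((\<alpha> - 1) * (k - h)) < real \<delta>" using a hk by (simp add: r_def of_nat_diff)
  then have "(\<alpha> - 1) * (k - h) < \<delta>" by linarith
  moreover have "\<alpha> * (k - h) = (\<alpha> - 1) * (k - h) + (k - h)"
    using assms(2) by (simp add: diff_mult_distrib)
  ultimately show "h + \<alpha> * (k - h) < k + \<delta>" using hk by simp
qed

lemma gauss_binom_ratio:
  assumes "h \<le> k" "h \<le> n" "2 \<le> q"
  shows "gauss_binom q n h / gauss_binom q k h
       = real (\<Prod>i<h. q ^ n - q ^ i) / real (\<Prod>i<h. q ^ k - q ^ i)"
proof -
  have real_prod: "real (\<Prod>i<h. q ^ m - q ^ i) = (\<Prod>i<h. real q ^ m - real q ^ i)"
    and prod_pos: "(\<Prod>i<h. real q ^ m - real q ^ i) > 0" if "h \<le> m" for m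
  proof -
    have "real q ^ i < real q ^ m" if "i < h" for i
      using \<open>h \<le> m\<close> \<open>i < h\<close> assms(3) by (intro power_strict_increasing) auto
    then show "(\<Prod>i<h. real q ^ m - real q ^ i) > 0" by (auto intro: prod_pos)
    have "q ^ i \<le> q ^ m" if "i < h" for i
      using \<open>h \<le> m\<close> \<open>i < h\<close> assms(3) by (intro power_increasing) auto
    then show "real (\<Prod>i<h. q ^ m - q ^ i) = (\<Prod>i<h. real q ^ m - real q ^ i)"
      by (simp add: of_nat_prod of_nat_diff)
  qed
  have "gauss_binom q m h = (\<Prod>i<h. real q ^ m - real q ^ i) / (\<Prod>i<h. real q ^ h - real q ^ i)"
    for m unfolding gauss_binom_def by (rule prod_dividef)
  moreover have "(\<Prod>i<h. real q ^ h - real q ^ i) \<noteq> 0" using prod_pos[of h] by linarith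
  ultimately show ?thesis
    unfolding real_prod[OF assms(1)] real_prod[OF assms(2)] by (simp only:) simp
qed

lemma B_cov_le:
  assumes "1 \<le> \<alpha>"
    and "\<And>C :: ('a::{finite,field}^'n) set set. covering_code k \<delta> \<alpha> C \<Longrightarrow> real (card C) \<le> b"
  shows "real (B_cov TYPE('a ^ 'n) k \<delta> \<alpha>) \<le> b"
proof -
  let ?S = "{card C | C :: ('a ^ 'n) set set. covering_code k \<delta> \<alpha> C}"
  have "finite ?S" using finite_imageI[of UNIV card] by (auto intro: finite_subset)
  moreover have "covering_code k \<delta> \<alpha> ({} :: ('a ^ 'n) set set)"
    using assms(1) by (auto simp: covering_code_def)
  ultimately have "Max ?S \<in> ?S" by (intro Max_in) auto
  then show ?thesis using assms(2) by (auto simp: B_cov_def)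
qed

lemma card_field_ge_2: "2 \<le> CARD('a::{finite,field})"
  using card_mono[of UNIV "{0::'a, 1}"] by simp

theorem mainTheorem1:
  fixes k \<delta> \<alpha> :: nat
  assumes "1 \<le> k" and "k \<le> CARD('n::finite)"
    and "1 \<le> \<delta>" and "2 \<le> \<alpha>"
    and "\<delta> \<le> (\<alpha> - 1) * k"
  shows "real (B_cov TYPE('a::{finite,field} ^ 'n) k \<delta> \<alpha>)
     \<le> real (\<alpha> - 1) *
        gauss_binom CARD('a) CARD('n) (nat \<lfloor>real k + 1 - real \<delta> / real (\<alpha> - 1)\<rfloor>)
      / gauss_binom CARD('a) k (nat \<lfloor>real k + 1 - real \<delta> / real (\<alpha> - 1)\<rfloor>)"
proof -
  define h where "h = nat \<lfloor>real k + 1 - real \<delta> / real (\<alpha> - 1)\<rfloor>"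
  let ?q = "CARD('a)" and ?n = "CARD('n)"
  have hk: "h \<le> k" and small: "h + \<alpha> * (k - h) < k + \<delta>"
    using floor_dimension_bounds[OF assms(3-5)] unfolding h_def by auto
  let ?Pn = "\<Prod>i<h. ?q ^ ?n - ?q ^ i" and ?Pk = "\<Prod>i<h. ?q ^ k - ?q ^ i"
  have Pk_pos: "0 < ?Pk"
    using hk card_field_ge_2[where 'a='a] by (auto intro!: prod_pos power_strict_increasing)
  have "real (card C) \<le> real (\<alpha> - 1) * real ?Pn / real ?Pk"
    if "covering_code k \<delta> \<alpha> (C :: ('a^'n) set set)" for C
  proof -
    have "real (card C) * real ?Pk \<le> real (\<alpha> - 1) * real ?Pn"
      using covering_code_card_mult_le[OF that hk assms(2) small] by (metis of_nat_le_iff of_nat_mult)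
    then show ?thesis using Pk_pos by (simp add: field_simps del: of_nat_prod)
  qed
  then have "real (B_cov TYPE('a ^ 'n) k \<delta> \<alpha>) \<le> real (\<alpha> - 1) * real ?Pn / real ?Pk"
    using assms(4) by (intro B_cov_le) auto
  moreover have "gauss_binom ?q ?n h / gauss_binom ?q k h = real ?Pn / real ?Pk"
    using hk assms(2) by (intro gauss_binom_ratio card_field_ge_2) auto
  ultimately show ?thesis
    unfolding h_def[symmetric] times_divide_eq_right[symmetric] by simp
qed

end
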